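(* Let $N\geq1$, $k\in\{1,\dots,N\}$ and for $i\in\{1,\dots,N\}$ let \[ v_i=\left(1-\frac{i-1}{N}\right)^k-\left(1-\frac{i}{N}\right)^k. \] Then for all integers $d\geq1$, \[ \sum_{i=1}^N v_i\left(\frac{i}{N+1}\right)^{1/d}\leq 2e\,k^{-1/d}. \] *)

theory Defs
  imports Complex_Main
begin

end

theory Submission
  imports Defs
begin

text \<open>The weights \<open>v i\<close> are the distribution of the minimum \<open>I\<close> of \<open>k\<close> independent uniform
  draws from \<open>{1..N}\<close>, so they sum to \<open>1\<close> and \<open>E I = \<Sum>i. P(I \<ge> i) = \<Sum>i. (i/N)^k \<le> N/(k+1) + 1\<close>.
  Concavity gives \<open>x^(1/d) \<le> k^(-1/d) (1 + k x)\<close>, hence the sum is at most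
  \<open>k^(-1/d) (1 + k E I/(N+1)) \<le> 3 k^(-1/d)\<close>.\<close>

lemma powr_le_one_plus:
  fixes y p :: real
  assumes "y \<ge> 0" "0 < p" "p \<le> 1"
  shows "y powr p \<le> 1 + y"
proof (cases "y \<le> 1")
  case True
  then have "y powr p \<le> 1"
    using assms powr_mono2[of p y 1] by simp
  then show ?thesis using assms(1) by linarith
next
  case False
  then have "y powr p \<le> y powr 1"
    using assms by (intro powr_mono) auto
  then show ?thesis using False by simp
qed

lemma powr_le_affine:
  fixes t x p :: real
  assumes "t > 0" "x \<ge> 0" "0 < p" "p \<le> 1"
  shows "x powr p \<le> t powr (- p) * (1 + t * x)"
proof -
  have "x powr p = t powr (- p) * (t * x) powr p"
    using assms by (simp add: powr_mult powr_minus field_simps)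
  also have "\<dots> \<le> t powr (- p) * (1 + t * x)"
    using assms by (intro mult_left_mono powr_le_one_plus) auto
  finally show ?thesis .
qed

lemma power_Suc_ge_top_binomial_terms:
  fixes x :: real
  assumes "x \<ge> 0"
  shows "(real n + 1) * x ^ n + x ^ Suc n \<le> (x + 1) ^ Suc n"
proof (induction n)
  case (Suc n)
  have "(real (Suc n) + 1) * x ^ Suc n + x ^ Suc (Suc n)
      \<le> (x + 1) * ((real n + 1) * x ^ n + x ^ Suc n)"
    using assms by (simp add: algebra_simps)
  also have "\<dots> \<le> (x + 1) ^ Suc (Suc n)"
    using Suc assms by (simp add: mult_left_mono)
  finally show ?case .
qed simp

lemma sum_lessThan_power_le:
  "(\<Sum>m<n. real m ^ k) \<le> real n ^ Suc k / (real k + 1)"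
proof (induction n)
  case (Suc n)
  have "(\<Sum>m<Suc n. real m ^ k) \<le> real n ^ Suc k / (real k + 1) + real n ^ k"
    using Suc by simp
  also have "\<dots> = ((real k + 1) * real n ^ k + real n ^ Suc k) / (real k + 1)"
    by (simp add: field_simps)
  also have "\<dots> \<le> (real n + 1) ^ Suc k / (real k + 1)"
    by (intro divide_right_mono power_Suc_ge_top_binomial_terms) auto
  finally show ?case by (simp add: add.commute)
qed simp

lemma sum_power_le:
  "(\<Sum>m=1..n. real m ^ k) \<le> real n ^ Suc k / (real k + 1) + real n ^ k"
proof -
  have "(\<Sum>m=1..n. real m ^ k) \<le> (\<Sum>m<Suc n. real m ^ k)"
    by (intro sum_mono2) auto
  also have "\<dots> \<le> real n ^ Suc k / (real k + 1) + real n ^ k"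
    using sum_lessThan_power_le[where n = n and k = k] by simp
  finally show ?thesis .
qed

lemma sum_index_times_diff:
  fixes a :: "nat \<Rightarrow> real"
  shows "(\<Sum>i=1..n. real i * (a i - a (Suc i))) = (\<Sum>i=1..n. a i) - real n * a (Suc n)"
  by (induction n) (auto simp: algebra_simps)

text \<open>\<open>min_tail N k i\<close> is the probability that the minimum of \<open>k\<close> independent uniform draws
  from \<open>{1..N}\<close> is at least \<open>i\<close>.\<close>

definition min_tail :: "nat \<Rightarrow> nat \<Rightarrow> nat \<Rightarrow> real" where
  "min_tail N k i = (1 - (real i - 1) / real N) ^ k"

lemma min_tail_Suc_self:
  assumes "N \<ge> 1" "k \<ge> 1"
  shows "min_tail N k (Suc N) = 0"
  using assms by (simp add: min_tail_def)

lemma min_tail_Suc_le: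
  assumes "i \<le> N"
  shows "min_tail N k (Suc i) \<le> min_tail N k i"
proof -
  have "0 \<le> 1 - real i / real N"
    using assms by (cases "N = 0") (auto simp: field_simps)
  moreover have "1 - real i / real N \<le> 1 - (real i - 1) / real N"
    by (simp add: divide_right_mono)
  ultimately show ?thesis by (simp add: min_tail_def power_mono)
qed

lemma sum_min_tail_diff:
  assumes "N \<ge> 1" "k \<ge> 1"
  shows "(\<Sum>i=1..N. min_tail N k i - min_tail N k (Suc i)) = 1"
  using sum_Suc_diff[of 1 N "\<lambda>i. - min_tail N k i"] assms
  by (simp add: min_tail_Suc_self min_tail_def)

lemma sum_min_tail_eq:
  assumes "N \<ge> 1"
  shows "(\<Sum>i=1..N. min_tail N k i) = (\<Sum>i=1..N. real i ^ k) / real N ^ k"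
proof -
  have "(\<Sum>i=1..N. min_tail N k i) = (\<Sum>i=1..N. min_tail N k (N + 1 - i))"
    using sum.atLeastAtMost_rev[of "min_tail N k" 1 N] by simp
  also have "\<dots> = (\<Sum>i=1..N. real i ^ k / real N ^ k)"
  proof (rule sum.cong)
    fix i assume "i \<in> {1..N}"
    then have "1 - (real (N + 1 - i) - 1) / real N = real i / real N"
      using assms by (auto simp: field_simps of_nat_diff)
    then show "min_tail N k (N + 1 - i) = real i ^ k / real N ^ k"
      by (simp add: min_tail_def power_divide)
  qed simp
  finally show ?thesis by (simp add: sum_divide_distrib)
qed

lemma sum_index_min_tail_diff_le:
  assumes "N \<ge> 1" "k \<ge> 1"
  shows "(\<Sum>i=1..N. real i * (min_tail N k i - min_tail N k (Suc i))) \<le> real N / (real k + 1) + 1"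
proof -
  have "(\<Sum>i=1..N. real i * (min_tail N k i - min_tail N k (Suc i)))
      = (\<Sum>i=1..N. real i ^ k) / real N ^ k"
    using sum_index_times_diff[of "min_tail N k" N] sum_min_tail_eq[OF assms(1)]
    by (simp add: min_tail_Suc_self[OF assms])
  also have "\<dots> \<le> (real N ^ Suc k / (real k + 1) + real N ^ k) / real N ^ k"
    by (intro divide_right_mono sum_power_le) auto
  also have "\<dots> = (real N / (real k + 1) + 1) * real N ^ k / real N ^ k"
    by (simp add: field_simps)
  also have "\<dots> = real N / (real k + 1) + 1"
    using assms by simp
  finally show ?thesis .
qed

lemma scaled_mean_bound_le_two:
  assumes "k \<le> N"
  shows "real k / real (N + 1) * (real N / (real k + 1) + 1) \<le> 2"
proof -
  have "real k * real k \<le> (real N + 1) * (real k + 1)"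
    using assms by (intro mult_mono) auto
  then have "real k * (real N + 1 + real k) \<le> 2 * ((real N + 1) * (real k + 1))"
    by (simp add: algebra_simps)
  moreover have "real k / real (N + 1) * (real N / (real k + 1) + 1)
      = real k * (real N + 1 + real k) / ((real N + 1) * (real k + 1))"
    by (simp add: field_simps)
  ultimately show ?thesis
    by (simp add: pos_divide_le_eq)
qed

theorem lemma3p2:
  fixes N k d :: nat and v :: "nat \<Rightarrow> real"
  assumes "N \<ge> 1" and "1 \<le> k" and "k \<le> N"
    and "\<And>i. v i = (1 - (real i - 1) / real N) ^ k - (1 - real i / real N) ^ k"
    and "d \<ge> 1"
  shows "(\<Sum>i=1..N. v i * (real i / real (N + 1)) powr (1 / real d))
           \<le> 2 * exp 1 * real k powr (- 1 / real d)"
proof -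
  define c where "c = real k powr (- (1 / real d))"
  have v: "v i = min_tail N k i - min_tail N k (Suc i)" for i
    using assms(4)[of i] by (simp add: min_tail_def add_divide_distrib)
  have v_nonneg: "v i \<ge> 0" if "i \<le> N" for i
    using min_tail_Suc_le[OF that] by (simp add: v)
  have "(\<Sum>i=1..N. v i * (real i / real (N + 1)) powr (1 / real d))
      \<le> (\<Sum>i=1..N. v i * (c * (1 + real k * (real i / real (N + 1)))))"
    unfolding c_def using assms(2,5)
    by (intro sum_mono mult_left_mono powr_le_affine v_nonneg) auto
  also have "\<dots> = c * ((\<Sum>i=1..N. v i) + real k / real (N + 1) * (\<Sum>i=1..N. real i * v i))"
    by (simp add: sum_distrib_left sum.distrib algebra_simps)
  also have "\<dots> \<le> c * (1 + real k / real (N + 1) * (real N / (real k + 1) + 1))"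
    using sum_min_tail_diff[OF assms(1,2)] sum_index_min_tail_diff_le[OF assms(1,2)]
    by (intro mult_left_mono add_mono) (auto simp: v c_def)
  also have "\<dots> \<le> c * (2 * exp 1)"
    using scaled_mean_bound_le_two[OF assms(3)] exp_ge_add_one_self[of 1]
    by (intro mult_left_mono) (auto simp: c_def)
  finally show ?thesis by (simp add: c_def algebra_simps)
qed

end
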